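(* Let $G$ be a finite group and $T,T'$ be $G$-transfer systems. If $(T,T')$ is a compatible pair, then $\mathrm{Hull}(T)\subseteq T'$.
   Context: A $G$-transfer system is a partial order $\to$ on the set of subgroups of $G$ such that: $K\to H$ implies $K\le H$; $H\to H$ for all $H$; $L\to K$ and $K\to H$ imply $L\to H$; $K\to H$ implies $K\cap L\to H\cap L$ for every $L\le G$; $K\to H$ implies $gKg^{-1}\to gHg^{-1}$ for all $g\in G$. A transfer system is saturated if whenever $L\le K\le H$ and $L\to H$ is in it, then $K\to H$ is in it; $\mathrm{Hull}(T)$ is the smallest saturated $G$-transfer system containing $T$. A pair $(T,T')$ of $G$-transfer systems is compatible if (1) $T\subseteq T'$, and (2) for all subgroups $A,B,C$ with $B,C\le A$: if $B\to A$ is in $T$ and $B\cap C\to B$ is in $T'$, then $C\to A$ is in $T'$. *)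

theory Defs
  imports "HOL-Algebra.Algebra"
begin

text \<open>A relation on subgroups of G is encoded as a set of pairs (K, H), meaning K \<rightarrow> H.\<close>

definition conjugate :: "('a, 'b) monoid_scheme \<Rightarrow> 'a \<Rightarrow> 'a set \<Rightarrow> 'a set" where
  "conjugate G g H = (\<lambda>h. g \<otimes>\<^bsub>G\<^esub> h \<otimes>\<^bsub>G\<^esub> inv\<^bsub>G\<^esub> g) ` H"

definition transfer_system :: "('a, 'b) monoid_scheme \<Rightarrow> ('a set \<times> 'a set) set \<Rightarrow> bool" where
  "transfer_system G T \<longleftrightarrow>
     T \<subseteq> {(K, H). subgroup K G \<and> subgroup H G \<and> K \<subseteq> H}
   \<and> (\<forall>H. subgroup H G \<longrightarrow> (H, H) \<in> T)
   \<and> (\<forall>L K H. (L, K) \<in> T \<longrightarrow> (K, H) \<in> T \<longrightarrow> (L, H) \<in> T)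
   \<and> (\<forall>K H L. (K, H) \<in> T \<longrightarrow> subgroup L G \<longrightarrow> (K \<inter> L, H \<inter> L) \<in> T)
   \<and> (\<forall>K H g. (K, H) \<in> T \<longrightarrow> g \<in> carrier G \<longrightarrow>
        (conjugate G g K, conjugate G g H) \<in> T)"

definition saturated :: "('a, 'b) monoid_scheme \<Rightarrow> ('a set \<times> 'a set) set \<Rightarrow> bool" where
  "saturated G T \<longleftrightarrow>
     (\<forall>L K H. subgroup L G \<longrightarrow> subgroup K G \<longrightarrow> subgroup H G \<longrightarrow>
        L \<subseteq> K \<longrightarrow> K \<subseteq> H \<longrightarrow> (L, H) \<in> T \<longrightarrow> (K, H) \<in> T)"

definition Hull :: "('a, 'b) monoid_scheme \<Rightarrow> ('a set \<times> 'a set) set \<Rightarrow> ('a set \<times> 'a set) set" where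
  "Hull G T = \<Inter> {S. transfer_system G S \<and> saturated G S \<and> T \<subseteq> S}"

definition compatible :: "('a, 'b) monoid_scheme \<Rightarrow> ('a set \<times> 'a set) set \<Rightarrow> ('a set \<times> 'a set) set \<Rightarrow> bool" where
  "compatible G T T' \<longleftrightarrow> T \<subseteq> T'
   \<and> (\<forall>A B C. subgroup A G \<longrightarrow> subgroup B G \<longrightarrow> subgroup C G \<longrightarrow> B \<subseteq> A \<longrightarrow> C \<subseteq> A \<longrightarrow>
        (B, A) \<in> T \<longrightarrow> (B \<inter> C, B) \<in> T' \<longrightarrow> (C, A) \<in> T')"

end

theory Submission
  imports Defs
begin

text \<open>Call \<open>M \<le> A\<close> detecting for \<open>T'\<close> if for all subgroups \<open>L\<close> and \<open>C \<le> A \<inter> L\<close>, the transfer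
  \<open>M \<inter> C \<rightarrow> M \<inter> L\<close> in \<open>T'\<close> forces \<open>C \<rightarrow> A \<inter> L\<close> in \<open>T'\<close>. Detecting pairs form a saturated
  transfer system (saturation because \<open>T'\<close> is closed under restriction); compatibility, applied
  to the restricted transfers \<open>M \<inter> L \<rightarrow> A \<inter> L\<close> of \<open>T\<close>, says that every pair of \<open>T\<close> is
  detecting; and taking \<open>L = A\<close>, \<open>C = M\<close> shows every detecting pair lies in \<open>T'\<close>.\<close>

lemma (in group) conjugation_hom:
  "g \<in> carrier G \<Longrightarrow> (\<lambda>h. g \<otimes> h \<otimes> inv g) \<in> hom G G"
  by (rule homI) (simp_all add: m_assoc flip: m_assoc[of "inv g"])

lemma (in group) subgroup_conjugate:
  "subgroup H G \<Longrightarrow> g \<in> carrier G \<Longrightarrow> subgroup (conjugate G g H) G"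
  unfolding conjugate_def
  by (rule group_hom.subgroup_img_is_subgroup)
    (simp_all add: group_hom_def group_hom_axioms_def is_group conjugation_hom)

lemma (in group) conjugate_inv_conjugate:
  "S \<subseteq> carrier G \<Longrightarrow> g \<in> carrier G \<Longrightarrow> conjugate G (inv g) (conjugate G g S) = S"
  unfolding conjugate_def image_image
  by (rule image_cong[OF refl, THEN trans, OF _ image_ident])
    (auto simp: m_assoc simp flip: m_assoc[of "inv g"])

lemma (in group) conjugate_conjugate_inv:
  "S \<subseteq> carrier G \<Longrightarrow> g \<in> carrier G \<Longrightarrow> conjugate G g (conjugate G (inv g) S) = S"
  using conjugate_inv_conjugate[of S "inv g"] by simp

lemma (in group) conjugate_Int:
  "S \<subseteq> carrier G \<Longrightarrow> R \<subseteq> carrier G \<Longrightarrow> g \<in> carrier G \<Longrightarrow>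
    conjugate G g (S \<inter> R) = conjugate G g S \<inter> conjugate G g R"
  unfolding conjugate_def
  by (rule inj_on_image_Int[of _ "carrier G"]) (auto simp: inj_on_def)

lemma conjugate_mono: "S \<subseteq> R \<Longrightarrow> conjugate G g S \<subseteq> conjugate G g R"
  unfolding conjugate_def by (rule image_mono)

lemma transfer_system_subgroups:
  "transfer_system G T \<Longrightarrow> (K, H) \<in> T \<Longrightarrow> subgroup K G \<and> subgroup H G \<and> K \<subseteq> H"
  unfolding transfer_system_def by (elim conjE) blast

lemma transfer_system_refl: "transfer_system G T \<Longrightarrow> subgroup H G \<Longrightarrow> (H, H) \<in> T"
  unfolding transfer_system_def by (elim conjE) blast

lemma transfer_system_restrict:
  "transfer_system G T \<Longrightarrow> (K, H) \<in> T \<Longrightarrow> subgroup L G \<Longrightarrow> (K \<inter> L, H \<inter> L) \<in> T"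
  unfolding transfer_system_def by (elim conjE) blast

lemma transfer_system_conjugate:
  "transfer_system G T \<Longrightarrow> (K, H) \<in> T \<Longrightarrow> g \<in> carrier G \<Longrightarrow>
    (conjugate G g K, conjugate G g H) \<in> T"
  unfolding transfer_system_def by (elim conjE) blast

lemma Hull_least:
  "transfer_system G S \<Longrightarrow> saturated G S \<Longrightarrow> T \<subseteq> S \<Longrightarrow> Hull G T \<subseteq> S"
  unfolding Hull_def by blast

definition detects_transfers ::
    "('a, 'b) monoid_scheme \<Rightarrow> ('a set \<times> 'a set) set \<Rightarrow> 'a set \<Rightarrow> 'a set \<Rightarrow> bool" where
  "detects_transfers G T' M A \<longleftrightarrow>
     (\<forall>L C. subgroup L G \<longrightarrow> subgroup C G \<longrightarrow> C \<subseteq> A \<inter> L \<longrightarrow>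
        (M \<inter> C, M \<inter> L) \<in> T' \<longrightarrow> (C, A \<inter> L) \<in> T')"

lemma detects_transfersI:
  "(\<And>L C. subgroup L G \<Longrightarrow> subgroup C G \<Longrightarrow> C \<subseteq> A \<inter> L \<Longrightarrow>
      (M \<inter> C, M \<inter> L) \<in> T' \<Longrightarrow> (C, A \<inter> L) \<in> T') \<Longrightarrow> detects_transfers G T' M A"
  unfolding detects_transfers_def by blast

lemma detects_transfersD:
  "detects_transfers G T' M A \<Longrightarrow> subgroup L G \<Longrightarrow> subgroup C G \<Longrightarrow> C \<subseteq> A \<inter> L \<Longrightarrow>
      (M \<inter> C, M \<inter> L) \<in> T' \<Longrightarrow> (C, A \<inter> L) \<in> T'"
  unfolding detects_transfers_def by blast

lemma detects_transfers_refl: "detects_transfers G T' H H"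
  by (rule detects_transfersI) (simp add: Int_absorb1)

lemma detects_transfers_trans:
  assumes "group G" "subgroup M G" "K \<subseteq> M"
    and KM: "detects_transfers G T' K M" and MA: "detects_transfers G T' M A"
  shows "detects_transfers G T' K A"
proof (rule detects_transfersI)
  fix L C assume L: "subgroup L G" and C: "subgroup C G" "C \<subseteq> A \<inter> L"
    and KCL: "(K \<inter> C, K \<inter> L) \<in> T'"
  have "K \<inter> (M \<inter> C) = K \<inter> C" "K \<inter> (M \<inter> L) = K \<inter> L"
    using \<open>K \<subseteq> M\<close> by blast+
  moreover have "M \<inter> C \<subseteq> M \<inter> L" using C(2) by blast
  ultimately have "(M \<inter> C, M \<inter> L) \<in> T'"
    using detects_transfersD[OF KM, of "M \<inter> L" "M \<inter> C"] KCL
      group.subgroups_Inter_pair[OF \<open>group G\<close> \<open>subgroup M G\<close>] L C(1)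
    by (simp add: Int_absorb1)
  then show "(C, A \<inter> L) \<in> T'"
    using detects_transfersD[OF MA L C] by simp
qed

lemma detects_transfers_restrict:
  assumes "group G" "subgroup L' G" and MA: "detects_transfers G T' M A"
  shows "detects_transfers G T' (M \<inter> L') (A \<inter> L')"
proof (rule detects_transfersI)
  fix L C assume L: "subgroup L G" and C: "subgroup C G" "C \<subseteq> A \<inter> L' \<inter> L"
    and "(M \<inter> L' \<inter> C, M \<inter> L' \<inter> L) \<in> T'"
  moreover have "M \<inter> L' \<inter> C = M \<inter> C" "M \<inter> L' \<inter> L = M \<inter> (L' \<inter> L)"
    using C(2) by blast+
  ultimately have "(C, A \<inter> (L' \<inter> L)) \<in> T'"
    using detects_transfersD[OF MA group.subgroups_Inter_pair[OF assms(1,2) L] C(1)] by auto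
  then show "(C, A \<inter> L' \<inter> L) \<in> T'" by (simp add: Int_assoc)
qed

lemma detects_transfers_saturate:
  assumes "transfer_system G T'" "subgroup L\<^sub>0 G" "L\<^sub>0 \<subseteq> K"
    and L\<^sub>0H: "detects_transfers G T' L\<^sub>0 H"
  shows "detects_transfers G T' K H"
proof (rule detects_transfersI)
  fix L C assume L: "subgroup L G" and C: "subgroup C G" "C \<subseteq> H \<inter> L"
    and "(K \<inter> C, K \<inter> L) \<in> T'"
  then have "(K \<inter> C \<inter> L\<^sub>0, K \<inter> L \<inter> L\<^sub>0) \<in> T'"
    using transfer_system_restrict[OF assms(1)] assms(2) by blast
  moreover have "K \<inter> C \<inter> L\<^sub>0 = L\<^sub>0 \<inter> C" "K \<inter> L \<inter> L\<^sub>0 = L\<^sub>0 \<inter> L"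
    using assms(3) by blast+
  ultimately show "(C, H \<inter> L) \<in> T'" using detects_transfersD[OF L\<^sub>0H L C] by simp
qed

lemma (in group) detects_transfers_conjugate:
  assumes T': "transfer_system G T'" and "subgroup M G" "subgroup A G" "g \<in> carrier G"
    and MA: "detects_transfers G T' M A"
  shows "detects_transfers G T' (conjugate G g M) (conjugate G g A)"
proof (rule detects_transfersI)
  let ?c = "conjugate G g" and ?d = "conjugate G (inv g)"
  fix L C assume L: "subgroup L G" and C: "subgroup C G" "C \<subseteq> ?c A \<inter> L"
    and cMCL: "(?c M \<inter> C, ?c M \<inter> L) \<in> T'"
  have carrier: "M \<subseteq> carrier G" "A \<subseteq> carrier G" "L \<subseteq> carrier G" "C \<subseteq> carrier G"
    "?c M \<subseteq> carrier G" "?c A \<subseteq> carrier G" "?d L \<subseteq> carrier G"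
    using assms L C subgroup.subset subgroup_conjugate by (metis inv_closed)+
  have d_Int: "\<And>S R. S \<subseteq> carrier G \<Longrightarrow> R \<subseteq> carrier G \<Longrightarrow> ?d (S \<inter> R) = ?d S \<inter> ?d R"
    using \<open>g \<in> carrier G\<close> by (simp add: conjugate_Int)
  have "(?d (?c M \<inter> C), ?d (?c M \<inter> L)) \<in> T'"
    using transfer_system_conjugate[OF T' cMCL] \<open>g \<in> carrier G\<close> by simp
  then have "(M \<inter> ?d C, M \<inter> ?d L) \<in> T'"
    using carrier \<open>g \<in> carrier G\<close> by (simp add: d_Int conjugate_inv_conjugate)
  moreover have "?d C \<subseteq> A \<inter> ?d L"
    using conjugate_mono[OF C(2), of G "inv g"] carrier \<open>g \<in> carrier G\<close>
    by (simp add: d_Int conjugate_inv_conjugate)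
  ultimately have "(?d C, A \<inter> ?d L) \<in> T'"
    using detects_transfersD[OF MA] L C(1) \<open>g \<in> carrier G\<close> by (simp add: subgroup_conjugate)
  then have "(?c (?d C), ?c (A \<inter> ?d L)) \<in> T'"
    using transfer_system_conjugate[OF T'] \<open>g \<in> carrier G\<close> by blast
  then show "(C, ?c A \<inter> L) \<in> T'"
    using carrier \<open>g \<in> carrier G\<close> by (simp add: conjugate_Int conjugate_conjugate_inv)
qed

lemma compatible_detects_transfers:
  assumes "group G" "transfer_system G T" "compatible G T T'" "(M, A) \<in> T"
  shows "detects_transfers G T' M A"
proof (rule detects_transfersI)
  fix L C assume L: "subgroup L G" and C: "subgroup C G" "C \<subseteq> A \<inter> L"
    and "(M \<inter> C, M \<inter> L) \<in> T'"
  moreover have "(M \<inter> L, A \<inter> L) \<in> T"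
    using transfer_system_restrict[OF assms(2,4) L] .
  moreover have "M \<inter> L \<inter> C = M \<inter> C" using C(2) by blast
  moreover have "subgroup M G" "subgroup A G" "M \<subseteq> A"
    using transfer_system_subgroups[OF assms(2,4)] by simp_all
  ultimately show "(C, A \<inter> L) \<in> T'"
    using assms(3) group.subgroups_Inter_pair[OF assms(1)] L
    unfolding compatible_def by (metis inf_le2 inf_mono order_refl)
qed

definition detecting_pairs ::
    "('a, 'b) monoid_scheme \<Rightarrow> ('a set \<times> 'a set) set \<Rightarrow> ('a set \<times> 'a set) set" where
  "detecting_pairs G T' =
     {(M, A). subgroup M G \<and> subgroup A G \<and> M \<subseteq> A \<and> detects_transfers G T' M A}"

lemma mem_detecting_pairs:
  "(M, A) \<in> detecting_pairs G T' \<longleftrightarrow>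
     subgroup M G \<and> subgroup A G \<and> M \<subseteq> A \<and> detects_transfers G T' M A"
  unfolding detecting_pairs_def by simp

lemma detecting_pairs_subset:
  assumes "transfer_system G T'"
  shows "detecting_pairs G T' \<subseteq> T'"
proof clarify
  fix M A assume "(M, A) \<in> detecting_pairs G T'"
  then have "subgroup M G" "subgroup A G" "M \<subseteq> A" "detects_transfers G T' M A"
    by (simp_all add: mem_detecting_pairs)
  then show "(M, A) \<in> T'"
    using detects_transfersD[of G T' M A A M] transfer_system_refl[OF assms]
    by (simp add: Int_absorb1 Int_absorb2)
qed

lemma compatible_subset_detecting_pairs:
  assumes "group G" "transfer_system G T" "compatible G T T'"
  shows "T \<subseteq> detecting_pairs G T'"
proof clarify
  fix M A assume "(M, A) \<in> T"
  then show "(M, A) \<in> detecting_pairs G T'"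
    using compatible_detects_transfers[OF assms] transfer_system_subgroups[OF assms(2)]
    by (simp add: mem_detecting_pairs)
qed

lemma transfer_system_detecting_pairs:
  assumes "group G" "transfer_system G T'"
  shows "transfer_system G (detecting_pairs G T')"
  unfolding transfer_system_def
proof (intro conjI allI impI)
  show "detecting_pairs G T' \<subseteq> {(K, H). subgroup K G \<and> subgroup H G \<and> K \<subseteq> H}"
    unfolding detecting_pairs_def by auto
  show "(H, H) \<in> detecting_pairs G T'" if "subgroup H G" for H
    using that detects_transfers_refl by (simp add: mem_detecting_pairs)
  show "(K, A) \<in> detecting_pairs G T'"
    if "(K, M) \<in> detecting_pairs G T'" "(M, A) \<in> detecting_pairs G T'" for K M A
    using that detects_transfers_trans[OF assms(1), of M K T' A]
    by (auto simp: mem_detecting_pairs)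
  show "(M \<inter> L, A \<inter> L) \<in> detecting_pairs G T'"
    if "(M, A) \<in> detecting_pairs G T'" "subgroup L G" for M A L
    using that detects_transfers_restrict[OF assms(1) that(2), of T' M A]
      group.subgroups_Inter_pair[OF assms(1)]
    by (auto simp: mem_detecting_pairs)
  show "(conjugate G g M, conjugate G g A) \<in> detecting_pairs G T'"
    if "(M, A) \<in> detecting_pairs G T'" "g \<in> carrier G" for M A g
    using that group.detects_transfers_conjugate[OF assms(1,2), of M A g]
      group.subgroup_conjugate[OF assms(1)] conjugate_mono[of M A G g]
    by (simp add: mem_detecting_pairs)
qed

lemma saturated_detecting_pairs:
  assumes "transfer_system G T'"
  shows "saturated G (detecting_pairs G T')"
  unfolding saturated_def
proof (intro allI impI)
  fix L K H assume "subgroup L G" "subgroup K G" "subgroup H G" "L \<subseteq> K" "K \<subseteq> H"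
    and "(L, H) \<in> detecting_pairs G T'"
  then show "(K, H) \<in> detecting_pairs G T'"
    using detects_transfers_saturate[OF assms] by (simp add: mem_detecting_pairs)
qed

theorem mainTheorem6:
  fixes G :: "('a, 'b) monoid_scheme" and T T' :: "('a set \<times> 'a set) set"
  assumes "group G" and "finite (carrier G)"
    and "transfer_system G T" and "transfer_system G T'"
    and "compatible G T T'"
  shows "Hull G T \<subseteq> T'"
proof -
  have "Hull G T \<subseteq> detecting_pairs G T'"
    using transfer_system_detecting_pairs[OF assms(1,4)] saturated_detecting_pairs[OF assms(4)]
      compatible_subset_detecting_pairs[OF assms(1,3,5)]
    by (rule Hull_least)
  also have "\<dots> \<subseteq> T'"
    using assms(4) by (rule detecting_pairs_subset)
  finally show ?thesis .
qed

end
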